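(* Let $0<\alpha<1$, $\sigma>0$, $N_1$ a positive integer, $h=\sigma^2\alpha^2$, $T=\sigma\alpha\sqrt{N_1}$, $\kappa=\frac\alpha{1-\alpha}$, and let $n\ge1$ be an integer. For $x\in(0,1]$ and complex $u\notin(-\infty,0]$ let $$f(u,x)=\frac{\sin(\alpha\pi)}{\alpha\pi}\frac{1}{2\sqrt u}\frac{xe^{\sqrt u-T}}{e^{\frac1\alpha(\sqrt u-T)}+x}$$ (principal branch of $\sqrt u$). Let $u^*=\frac{1+(1-2\alpha)\sqrt{4\alpha-4\alpha^2+1}}{2(1-\alpha)^2}$, $\gamma=\alpha\log\!\Big(\frac{\frac1\kappa\sqrt{u^*}+1}{\sqrt{u^*}-1}\Big)+\sqrt{u^*}$, $x^*=e^{\frac1\alpha(\gamma-T)}$, $M_0=2\max\left\{\frac{\sigma^2}{4},1+\mathrm{ceil}\!\left(\frac{9\pi^2}{\sigma^2}\right),2\,\mathrm{ceil}\!\left[\left(1+\sqrt{\pi/\sigma}\right)^4\right]\right\}$, and $\Upsilon=\{x\in[x^*,1]:(T+\alpha\log x)^2-\alpha^2\pi^2>M_0h\}$. For $x\in\Upsilon$ put $a=2\alpha\pi(T+\alpha\log x)$ and $u_0=(T+\alpha\log x)^2-\alpha^2\pi^2-ia$. Let $N_0>0$ be a fixed sufficiently large number, $\rho_0=\frac12\min\{\alpha^2\pi^2,2\pi\alpha\gamma,h/N_0\}$, and for $0<\rho\le\rho_0$ let $C^{\pm}_\rho=\{z=u_0+\rho e^{i\theta}:\theta:0\to\pm2\pi\}$.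 Then for arbitrary $\rho\in(0,\rho_0]$ it holds uniformly for $x\in\Upsilon$ that $$\left|\int_{C^{\pm}_\rho}f(u,x)e^{-i\frac{2n\pi}{h}u}\,\mathrm{d}u\right|=e^{(\rho-a)\frac{2n\pi}{h}}x^\alpha\,\mathcal{O}(1)$$ as $T\to+\infty$, where the constant in $\mathcal{O}(1)$ is independent of $x$, $h$, $\alpha$, $\sigma$, $\rho$ and $T$.
   Context: $\mathrm{ceil}(y)$ is the least integer $\ge y$. $u_0$ is a simple pole of $u\mapsto f(u,x)$. *)

theory Defs
  imports "HOL-Complex_Analysis.Complex_Analysis"
begin

definition fA2 :: "real \<Rightarrow> real \<Rightarrow> complex \<Rightarrow> real \<Rightarrow> complex" where
  "fA2 \<alpha> T u x =
     complex_of_real (sin (\<alpha> * pi) / (\<alpha> * pi)) * (1 / (2 * csqrt u)) *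
     (complex_of_real x * exp (csqrt u - complex_of_real T)) /
     (exp ((csqrt u - complex_of_real T) / complex_of_real \<alpha>) + complex_of_real x)"

definition ustarA2 :: "real \<Rightarrow> real" where
  "ustarA2 \<alpha> = (1 + (1 - 2*\<alpha>) * sqrt (4*\<alpha> - 4*\<alpha>^2 + 1)) / (2 * (1 - \<alpha>)^2)"

definition kappaA2 :: "real \<Rightarrow> real" where
  "kappaA2 \<alpha> = \<alpha> / (1 - \<alpha>)"

definition gammaA2 :: "real \<Rightarrow> real" where
  "gammaA2 \<alpha> = \<alpha> * ln (((1 / kappaA2 \<alpha>) * sqrt (ustarA2 \<alpha>) + 1) / (sqrt (ustarA2 \<alpha>) - 1))
                 + sqrt (ustarA2 \<alpha>)"

definition xstarA2 :: "real \<Rightarrow> real \<Rightarrow> real" where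
  "xstarA2 \<alpha> T = exp ((1 / \<alpha>) * (gammaA2 \<alpha> - T))"

definition M0A2 :: "real \<Rightarrow> real" where
  "M0A2 \<sigma> = 2 * Max {\<sigma>^2 / 4,
                       1 + real_of_int (ceiling (9 * pi^2 / \<sigma>^2)),
                       2 * real_of_int (ceiling ((1 + sqrt (pi / \<sigma>)) ^ 4))}"

definition UpsilonA2 :: "real \<Rightarrow> real \<Rightarrow> real \<Rightarrow> real \<Rightarrow> real set" where
  "UpsilonA2 \<alpha> \<sigma> T h =
     {x. xstarA2 \<alpha> T \<le> x \<and> x \<le> 1 \<and> (T + \<alpha> * ln x)^2 - \<alpha>^2 * pi^2 > M0A2 \<sigma> * h}"

definition rho0A2 :: "real \<Rightarrow> real \<Rightarrow> real \<Rightarrow> real" where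
  "rho0A2 \<alpha> h N0 = (1/2) * Min {\<alpha>^2 * pi^2, 2 * pi * \<alpha> * gammaA2 \<alpha>, h / N0}"

end

theory Submission
  imports Defs
begin

(* Write L = T + \<alpha> log x and w0 = L - i \<alpha> \<pi>, so that u0 = w0^2. The denominator of f(., x)
   vanishes exactly where sqrt u = L + i \<alpha> \<pi> (2m + 1); for m \<noteq> -1 both factors of
   |u - u0| = |sqrt u - w0| |sqrt u + w0| are at least 2 \<alpha> \<pi>, so the disc of radius
   2 \<rho> \<le> \<alpha>^2 \<pi>^2 around u0 contains no pole but u0 itself, and that one only when L > 0.
   The circle integral is therefore 2 \<pi> i times the residue at u0, which is
   -(sin (\<alpha> \<pi>) / \<pi>) e^(w0 - T) e^(-i k u0) and has modulus at most x^\<alpha> e^(-k a) / \<pi>.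
   This gives the bound with constant 2, uniformly in all parameters, for every N0 and T. *)

lemma part_circlepath_minus_two_pi:
  "part_circlepath z r 0 (- (2 * pi)) = reversepath (circlepath z r)"
proof
  fix t
  have "exp (\<i> * complex_of_real ((1 - t) * (2 * pi))) = exp (- (\<i> * complex_of_real (t * (2 * pi))))"
    by (simp add: algebra_simps exp_diff exp_two_pi_i' exp_minus divide_inverse)
  then show "part_circlepath z r 0 (- (2 * pi)) t = reversepath (circlepath z r) t"
    by (simp add: circlepath_def part_circlepath_def linepath_def reversepath_def)
qed

lemma norm_contour_integral_part_circlepath_full_turn:
  assumes "s \<in> {1, -1}"
  shows "norm (contour_integral (part_circlepath z r 0 (s * 2 * pi)) f)
           = norm (contour_integral (circlepath z r) f)"
  using assms
  by (auto simp: part_circlepath_minus_two_pi contour_integral_reversepath simp flip: circlepath_def)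

lemma ball_disjoint_nonpos_Reals:
  assumes "r \<le> Re z"
  shows "ball z r \<inter> \<real>\<^sub>\<le>\<^sub>0 = {}"
proof -
  have "0 < Re u" if "u \<in> ball z r" for u
    using that abs_Re_le_cmod[of "z - u"] assms by (simp add: dist_norm)
  then show ?thesis
    by (fastforce simp: complex_nonpos_Reals_iff)
qed

lemma exp_eq_neg_of_real_imp:
  assumes "0 < x" and "exp z = - complex_of_real x"
  shows "\<exists>n::int. z = complex_of_real (ln x) + \<i> * complex_of_real (pi * (2 * n + 1))"
proof -
  have "exp z = exp (complex_of_real (ln x) + \<i> * pi)"
    using assms by (simp add: exp_add exp_of_real)
  then obtain n :: int where "z = complex_of_real (ln x) + \<i> * pi + of_int (2 * n) * pi * \<i>"
    by (auto simp: exp_eq)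
  then show ?thesis
    by (intro exI[of _ n]) (simp add: complex_eq_iff algebra_simps)
qed

lemma csqrt_at_zero_of_fA2_denominator:
  assumes "0 < \<alpha>" and "0 < x"
    and "exp ((csqrt u - complex_of_real T) / complex_of_real \<alpha>) + complex_of_real x = 0"
  shows "\<exists>n::int. csqrt u = complex_of_real (T + \<alpha> * ln x) + \<i> * complex_of_real (\<alpha> * pi * (2 * n + 1))"
proof -
  have "exp ((csqrt u - complex_of_real T) / complex_of_real \<alpha>) = - complex_of_real x"
    using assms(3) by (simp add: add_eq_0_iff)
  then obtain n :: int where "(csqrt u - complex_of_real T) / complex_of_real \<alpha>
      = complex_of_real (ln x) + \<i> * complex_of_real (pi * (2 * real_of_int n + 1))"
    using exp_eq_neg_of_real_imp[OF \<open>0 < x\<close>] by blast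
  then have "csqrt u - complex_of_real T
      = complex_of_real \<alpha> * (complex_of_real (ln x) + \<i> * complex_of_real (pi * (2 * real_of_int n + 1)))"
    using \<open>0 < \<alpha>\<close> by (simp add: divide_eq_eq mult.commute)
  then show ?thesis
    by (intro exI[of _ n]) (simp add: complex_eq_iff algebra_simps)
qed

lemma fA2_denominator_zeros_near_pole:
  fixes \<alpha> L :: real
  defines "w0 \<equiv> complex_of_real L - \<i> * complex_of_real (\<alpha> * pi)"
  assumes "0 < \<alpha>" and "0 < x" and L: "L = T + \<alpha> * ln x" and "\<alpha> * pi < \<bar>L\<bar>"
    and near: "norm (u - w0\<^sup>2) < 4 * (\<alpha> * pi)\<^sup>2"
    and zero: "exp ((csqrt u - complex_of_real T) / complex_of_real \<alpha>) + complex_of_real x = 0"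
  shows "0 < L \<and> u = w0\<^sup>2"
proof -
  obtain n :: int where n: "csqrt u = complex_of_real L + \<i> * complex_of_real (\<alpha> * pi * (2 * real_of_int n + 1))"
    using csqrt_at_zero_of_fA2_denominator[OF \<open>0 < \<alpha>\<close> \<open>0 < x\<close> zero] L by blast
  have "0 \<le> L"
    using Re_csqrt[of u] n by simp
  have "0 < \<alpha> * pi"
    using \<open>0 < \<alpha>\<close> by simp
  with \<open>0 \<le> L\<close> \<open>\<alpha> * pi < \<bar>L\<bar>\<close> have "\<alpha> * pi < L"
    by simp
  have "n = -1"
  proof (rule ccontr)
    assume "n \<noteq> -1"
    have "csqrt u - w0 = \<i> * complex_of_real (2 * (\<alpha> * pi) * (real_of_int n + 1))"
      using n by (simp add: w0_def complex_eq_iff algebra_simps)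
    then have "norm (csqrt u - w0) = 2 * (\<alpha> * pi) * \<bar>real_of_int n + 1\<bar>"
      using \<open>0 < \<alpha>\<close> by (simp only: norm_mult norm_ii norm_of_real) (simp add: abs_mult)
    moreover have "1 \<le> \<bar>real_of_int n + 1\<bar>"
      using \<open>n \<noteq> -1\<close> by linarith
    ultimately have "2 * (\<alpha> * pi) \<le> norm (csqrt u - w0)"
      using mult_left_mono[of 1 "\<bar>real_of_int n + 1\<bar>" "2 * (\<alpha> * pi)"] \<open>0 < \<alpha> * pi\<close> by simp
    moreover have "2 * (\<alpha> * pi) \<le> norm (csqrt u + w0)"
      using abs_Re_le_cmod[of "csqrt u + w0"] n \<open>\<alpha> * pi < L\<close> by (simp add: w0_def)
    ultimately have "(2 * (\<alpha> * pi)) * (2 * (\<alpha> * pi)) \<le> norm (csqrt u - w0) * norm (csqrt u + w0)"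
      using \<open>0 < \<alpha> * pi\<close> by (intro mult_mono) auto
    also have "\<dots> = norm ((csqrt u)\<^sup>2 - w0\<^sup>2)"
      by (simp add: power2_eq_square algebra_simps flip: norm_mult)
    also have "\<dots> = norm (u - w0\<^sup>2)"
      by simp
    finally show False
      using near by (simp add: power2_eq_square)
  qed
  then have "csqrt u = w0"
    using n by (simp add: w0_def complex_eq_iff)
  then have "u = w0\<^sup>2"
    by (metis power2_csqrt)
  with \<open>\<alpha> * pi < L\<close> \<open>0 < \<alpha> * pi\<close> show ?thesis
    by simp
qed

lemma fA2_holomorphic_on:
  assumes "V \<inter> \<real>\<^sub>\<le>\<^sub>0 = {}"
    and "\<And>u. u \<in> V \<Longrightarrow> exp ((csqrt u - complex_of_real T) / complex_of_real \<alpha>) + complex_of_real x \<noteq> 0"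
  shows "(\<lambda>u. fA2 \<alpha> T u x) holomorphic_on V"
proof -
  have "0 \<notin> V"
    using assms(1) by auto
  then show ?thesis
    unfolding fA2_def using assms by (auto intro!: holomorphic_intros)
qed

lemma residue_fA2_exp:
  fixes \<alpha> L k :: real
  defines "w0 \<equiv> complex_of_real L - \<i> * complex_of_real (\<alpha> * pi)"
  assumes "0 < \<alpha>" and "\<alpha> < 1" and "0 < x" and L: "L = T + \<alpha> * ln x" and "0 < L"
  shows "residue (\<lambda>u. fA2 \<alpha> T u x * exp (- \<i> * complex_of_real k * u)) (w0\<^sup>2)
           = - complex_of_real (sin (\<alpha> * pi) / pi) * exp (w0 - complex_of_real T)
               * exp (- \<i> * complex_of_real k * w0\<^sup>2)"
proof -
  \<comment> \<open>The lower half-plane contains \<open>w0\<^sup>2\<close> and avoids the branch cut of \<open>csqrt\<close>.\<close>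
  define H where "H = {u. Im u < 0}"
  define c where "c = complex_of_real (sin (\<alpha> * pi) / (\<alpha> * pi))"
  define N where "N = (\<lambda>u. c * (1 / (2 * csqrt u)) * (complex_of_real x * exp (csqrt u - complex_of_real T))
                        * exp (- \<i> * complex_of_real k * u))"
  define D where "D = (\<lambda>u. exp ((csqrt u - complex_of_real T) / complex_of_real \<alpha>) + complex_of_real x)"
  define D' where "D' = - complex_of_real x / (2 * w0 * complex_of_real \<alpha>)"
  have w0_ne: "w0 \<noteq> 0"
    using \<open>0 < L\<close> by (auto simp: w0_def complex_eq_iff)
  have csqrt_w0: "csqrt (w0\<^sup>2) = w0"
    by (rule csqrt_square) (simp add: w0_def \<open>0 < L\<close>)
  have exp_w0: "exp ((w0 - complex_of_real T) / complex_of_real \<alpha>) = - complex_of_real x"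
  proof -
    have "(w0 - complex_of_real T) / complex_of_real \<alpha> = complex_of_real (ln x) - \<i> * pi"
      using \<open>0 < \<alpha>\<close> by (simp add: w0_def L complex_eq_iff field_simps)
    then show ?thesis
      using \<open>0 < x\<close> by (simp add: exp_diff exp_of_real)
  qed
  have H_nonpos: "H \<inter> \<real>\<^sub>\<le>\<^sub>0 = {}"
    by (auto simp: H_def complex_nonpos_Reals_iff)
  have "0 \<notin> H"
    by (simp add: H_def)
  have w0_H: "w0\<^sup>2 \<in> H"
    using \<open>0 < \<alpha>\<close> \<open>0 < L\<close> by (simp add: H_def w0_def power2_eq_square)
  have "N holomorphic_on H" and "D holomorphic_on H"
    unfolding N_def D_def using H_nonpos \<open>0 \<notin> H\<close> by (auto intro!: holomorphic_intros)
  moreover have "(D has_field_derivative D') (at (w0\<^sup>2))"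
    unfolding D_def using w0_H H_nonpos \<open>0 < \<alpha>\<close>
    by (auto intro!: derivative_eq_intros simp: D'_def csqrt_w0 exp_w0 field_simps)
  moreover have "N (w0\<^sup>2) \<noteq> 0"
    using sin_gt_zero[of "\<alpha> * pi"] \<open>0 < \<alpha>\<close> \<open>\<alpha> < 1\<close> \<open>0 < x\<close> w0_ne
    by (simp add: N_def c_def csqrt_w0)
  moreover have "D (w0\<^sup>2) = 0" and "D' \<noteq> 0"
    using \<open>0 < x\<close> \<open>0 < \<alpha>\<close> w0_ne by (simp_all add: D_def D'_def csqrt_w0 exp_w0)
  ultimately have "residue (\<lambda>u. N u / D u) (w0\<^sup>2) = N (w0\<^sup>2) / D'"
    using w0_H by (intro residue_simple_pole_deriv) (auto simp: H_def open_halfspace_Im_lt)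
  moreover have "(\<lambda>u. fA2 \<alpha> T u x * exp (- \<i> * complex_of_real k * u)) = (\<lambda>u. N u / D u)"
    by (simp add: fA2_def N_def D_def c_def fun_eq_iff)
  ultimately show ?thesis
    using \<open>0 < x\<close> \<open>0 < \<alpha>\<close> w0_ne by (simp add: N_def D'_def c_def csqrt_w0 field_simps)
qed

lemma norm_residue_fA2_exp:
  fixes \<alpha> L k :: real
  defines "w0 \<equiv> complex_of_real L - \<i> * complex_of_real (\<alpha> * pi)"
  assumes "0 < \<alpha>" and "\<alpha> < 1" and "0 < x" and L: "L = T + \<alpha> * ln x" and "0 < L"
  shows "norm (residue (\<lambda>u. fA2 \<alpha> T u x * exp (- \<i> * complex_of_real k * u)) (w0\<^sup>2))
           = sin (\<alpha> * pi) / pi * x powr \<alpha> * exp (- 2 * \<alpha> * pi * L * k)"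
proof -
  have "residue (\<lambda>u. fA2 \<alpha> T u x * exp (- \<i> * complex_of_real k * u)) (w0\<^sup>2)
          = - complex_of_real (sin (\<alpha> * pi) / pi) * exp (w0 - complex_of_real T)
              * exp (- \<i> * complex_of_real k * w0\<^sup>2)"
    unfolding w0_def by (rule residue_fA2_exp[OF \<open>0 < \<alpha>\<close> \<open>\<alpha> < 1\<close> \<open>0 < x\<close> L \<open>0 < L\<close>])
  moreover have "norm (complex_of_real (sin (\<alpha> * pi) / pi)) = sin (\<alpha> * pi) / pi"
    unfolding norm_of_real using sin_ge_zero[of "\<alpha> * pi"] \<open>0 < \<alpha>\<close> \<open>\<alpha> < 1\<close> by simp
  moreover have "norm (exp (w0 - complex_of_real T)) = x powr \<alpha>"
    using \<open>0 < x\<close> by (simp add: norm_exp_eq_Re w0_def L powr_def)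
  moreover have "norm (exp (- \<i> * complex_of_real k * w0\<^sup>2)) = exp (- 2 * \<alpha> * pi * L * k)"
    by (simp add: norm_exp_eq_Re w0_def power2_eq_square algebra_simps)
  ultimately show ?thesis
    by (simp only: norm_mult norm_minus_cancel)
qed

lemma norm_contour_integral_fA2_circlepath_le:
  fixes \<alpha> L k \<rho> :: real
  defines "w0 \<equiv> complex_of_real L - \<i> * complex_of_real (\<alpha> * pi)"
  assumes "0 < \<alpha>" and "\<alpha> < 1" and "0 < x" and L: "L = T + \<alpha> * ln x"
    and large: "2 * (\<alpha> * pi)\<^sup>2 < L\<^sup>2" and "0 < \<rho>" and small: "2 * \<rho> \<le> (\<alpha> * pi)\<^sup>2" and "0 \<le> k"
  shows "norm (contour_integral (circlepath (w0\<^sup>2) \<rho>) (\<lambda>u. fA2 \<alpha> T u x * exp (- \<i> * complex_of_real k * u)))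
           \<le> 2 * x powr \<alpha> * exp (- 2 * \<alpha> * pi * L * k)"
proof -
  define F where "F = (\<lambda>u. fA2 \<alpha> T u x * exp (- \<i> * complex_of_real k * u))"
  define S where "S = ball (w0\<^sup>2) (2 * \<rho>)"
  have "0 < (\<alpha> * pi)\<^sup>2"
    using \<open>0 < \<alpha>\<close> by simp
  have "Re (w0\<^sup>2) = L\<^sup>2 - (\<alpha> * pi)\<^sup>2"
    by (simp add: w0_def power2_eq_square)
  then have "S \<inter> \<real>\<^sub>\<le>\<^sub>0 = {}"
    unfolding S_def using large small by (intro ball_disjoint_nonpos_Reals) linarith
  have "(\<alpha> * pi)\<^sup>2 < \<bar>L\<bar>\<^sup>2"
    using large \<open>0 < (\<alpha> * pi)\<^sup>2\<close> power2_abs[of L] by linarith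
  then have "\<alpha> * pi < \<bar>L\<bar>"
    by (rule power2_less_imp_less) simp
  have poles: "0 < L \<and> u = w0\<^sup>2"
    if "u \<in> S" and "exp ((csqrt u - complex_of_real T) / complex_of_real \<alpha>) + complex_of_real x = 0" for u
  proof -
    have "norm (u - w0\<^sup>2) < 2 * \<rho>"
      using \<open>u \<in> S\<close> by (simp add: S_def dist_norm norm_minus_commute)
    then have "norm (u - w0\<^sup>2) < 4 * (\<alpha> * pi)\<^sup>2"
      using small \<open>0 < (\<alpha> * pi)\<^sup>2\<close> by linarith
    then show ?thesis
      unfolding w0_def
      by (rule fA2_denominator_zeros_near_pole[OF \<open>0 < \<alpha>\<close> \<open>0 < x\<close> L \<open>\<alpha> * pi < \<bar>L\<bar>\<close> _ that(2)])
  qed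
  have F_holo: "F holomorphic_on V" if "V \<subseteq> S" and "\<forall>u\<in>V. \<not> (0 < L \<and> u = w0\<^sup>2)" for V
    unfolding F_def using that \<open>S \<inter> \<real>\<^sub>\<le>\<^sub>0 = {}\<close> poles
    by (intro holomorphic_intros fA2_holomorphic_on) auto
  have "(F has_contour_integral 2 * pi * \<i> * residue F (w0\<^sup>2)) (circlepath (w0\<^sup>2) \<rho>)"
    using \<open>0 < \<rho>\<close> by (intro base_residue[of S] F_holo) (auto simp: S_def)
  then have "norm (contour_integral (circlepath (w0\<^sup>2) \<rho>) F) = 2 * pi * norm (residue F (w0\<^sup>2))"
    by (simp add: contour_integral_unique norm_mult)
  also have "\<dots> \<le> 2 * x powr \<alpha> * exp (- 2 * \<alpha> * pi * L * k)"
  proof (cases "0 < L")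
    case True
    have "norm (residue F (w0\<^sup>2)) = sin (\<alpha> * pi) / pi * x powr \<alpha> * exp (- 2 * \<alpha> * pi * L * k)"
      unfolding F_def w0_def by (rule norm_residue_fA2_exp[OF \<open>0 < \<alpha>\<close> \<open>\<alpha> < 1\<close> \<open>0 < x\<close> L True])
    then show ?thesis
      using sin_le_one[of "\<alpha> * pi"] sin_ge_zero[of "\<alpha> * pi"] \<open>0 < \<alpha>\<close> \<open>\<alpha> < 1\<close>
      by (simp add: mult_left_le_one_le)
  next
    case False
    then have "F holomorphic_on S"
      by (intro F_holo) auto
    then show ?thesis
      by (simp add: residue_holo[of S] S_def \<open>0 < \<rho>\<close>)
  qed
  finally show ?thesis
    by (simp add: F_def)
qed

lemma M0A2_ge:
  assumes "0 < \<sigma>"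
  shows "18 * pi\<^sup>2 / \<sigma>\<^sup>2 \<le> M0A2 \<sigma>"
proof -
  have "18 * pi\<^sup>2 / \<sigma>\<^sup>2 = 2 * (9 * pi\<^sup>2 / \<sigma>\<^sup>2)"
    by simp
  also have "\<dots> \<le> 2 * (1 + real_of_int \<lceil>9 * pi\<^sup>2 / \<sigma>\<^sup>2\<rceil>)"
    using le_of_int_ceiling[of "9 * pi\<^sup>2 / \<sigma>\<^sup>2"] by (intro mult_left_mono; linarith)
  also have "\<dots> \<le> M0A2 \<sigma>"
    unfolding M0A2_def by (intro mult_left_mono Max_ge) auto
  finally show ?thesis .
qed

lemma UpsilonA2_pos: "x \<in> UpsilonA2 \<alpha> \<sigma> T h \<Longrightarrow> 0 < x"
  unfolding UpsilonA2_def xstarA2_def by (auto intro: less_le_trans[OF exp_gt_zero])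

lemma UpsilonA2_square_gt:
  assumes "0 < \<sigma>" and "x \<in> UpsilonA2 \<alpha> \<sigma> T (\<sigma>\<^sup>2 * \<alpha>\<^sup>2)"
  shows "2 * (\<alpha> * pi)\<^sup>2 < (T + \<alpha> * ln x)\<^sup>2"
proof -
  have "18 * (\<alpha> * pi)\<^sup>2 \<le> M0A2 \<sigma> * (\<sigma>\<^sup>2 * \<alpha>\<^sup>2)"
    using mult_right_mono[OF M0A2_ge[OF \<open>0 < \<sigma>\<close>], of "\<sigma>\<^sup>2 * \<alpha>\<^sup>2"] \<open>0 < \<sigma>\<close>
    by (simp add: power_mult_distrib field_simps)
  moreover have "M0A2 \<sigma> * (\<sigma>\<^sup>2 * \<alpha>\<^sup>2) < (T + \<alpha> * ln x)\<^sup>2 - (\<alpha> * pi)\<^sup>2"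
    using assms(2) by (simp add: UpsilonA2_def power_mult_distrib)
  moreover have "0 \<le> (\<alpha> * pi)\<^sup>2"
    by simp
  ultimately show ?thesis
    by linarith
qed

lemma rho0A2_le: "2 * rho0A2 \<alpha> h N0 \<le> (\<alpha> * pi)\<^sup>2"
  unfolding rho0A2_def by (simp add: power_mult_distrib)

lemma norm_contour_integral_fA2_part_circlepath_le:
  fixes \<alpha> \<sigma> T \<rho> x s :: real and n :: nat
  defines "h \<equiv> \<sigma>\<^sup>2 * \<alpha>\<^sup>2" and "a \<equiv> 2 * \<alpha> * pi * (T + \<alpha> * ln x)"
  assumes "0 < \<alpha>" and "\<alpha> < 1" and "0 < \<sigma>" and "0 < \<rho>" and "\<rho> \<le> rho0A2 \<alpha> h N0"
    and "x \<in> UpsilonA2 \<alpha> \<sigma> T h" and "s \<in> {1, -1}"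
  shows "norm (contour_integral (part_circlepath
             (complex_of_real ((T + \<alpha> * ln x)^2 - \<alpha>^2 * pi^2) - \<i> * complex_of_real a) \<rho> 0 (s * 2 * pi))
           (\<lambda>u. fA2 \<alpha> T u x * exp (- \<i> * complex_of_real (2 * real n * pi / h) * u)))
         \<le> 2 * exp ((\<rho> - a) * (2 * real n * pi / h)) * x powr \<alpha>"
proof -
  define L where "L = T + \<alpha> * ln x"
  define k where "k = 2 * real n * pi / h"
  have "0 \<le> k"
    by (simp add: k_def h_def)
  have "complex_of_real ((T + \<alpha> * ln x)^2 - \<alpha>^2 * pi^2) - \<i> * complex_of_real a
          = (complex_of_real L - \<i> * complex_of_real (\<alpha> * pi))\<^sup>2"
    by (simp add: L_def a_def complex_eq_iff power2_eq_square algebra_simps)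
  then have "norm (contour_integral (part_circlepath
             (complex_of_real ((T + \<alpha> * ln x)^2 - \<alpha>^2 * pi^2) - \<i> * complex_of_real a) \<rho> 0 (s * 2 * pi))
           (\<lambda>u. fA2 \<alpha> T u x * exp (- \<i> * complex_of_real k * u)))
      = norm (contour_integral (circlepath ((complex_of_real L - \<i> * complex_of_real (\<alpha> * pi))\<^sup>2) \<rho>)
           (\<lambda>u. fA2 \<alpha> T u x * exp (- \<i> * complex_of_real k * u)))"
    using \<open>s \<in> {1, -1}\<close> by (simp add: norm_contour_integral_part_circlepath_full_turn)
  also have "\<dots> \<le> 2 * x powr \<alpha> * exp (- 2 * \<alpha> * pi * L * k)"
  proof (rule norm_contour_integral_fA2_circlepath_le)
    show "0 < x"
      using \<open>x \<in> UpsilonA2 \<alpha> \<sigma> T h\<close> by (rule UpsilonA2_pos)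
    show "2 * (\<alpha> * pi)\<^sup>2 < L\<^sup>2"
      using UpsilonA2_square_gt \<open>0 < \<sigma>\<close> \<open>x \<in> UpsilonA2 \<alpha> \<sigma> T h\<close> by (simp add: L_def h_def)
    show "2 * \<rho> \<le> (\<alpha> * pi)\<^sup>2"
      using rho0A2_le[of \<alpha> h N0] \<open>\<rho> \<le> rho0A2 \<alpha> h N0\<close> by linarith
  qed (use assms \<open>0 \<le> k\<close> L_def in auto)
  also have "\<dots> \<le> 2 * exp ((\<rho> - a) * k) * x powr \<alpha>"
  proof -
    have "- 2 * \<alpha> * pi * L * k \<le> (\<rho> - a) * k"
      using \<open>0 < \<rho>\<close> \<open>0 \<le> k\<close> by (simp add: a_def L_def algebra_simps)
    then show ?thesis
      by (simp add: mult.commute mult_left_mono)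
  qed
  finally show ?thesis
    by (simp add: k_def)
qed

theorem lemmaA2:
  fixes n :: nat
  assumes "n \<ge> 1"
  shows "\<exists>N0bar>0. \<forall>N0\<ge>N0bar. \<exists>C. \<forall>\<alpha> \<sigma>::real. 0 < \<alpha> \<and> \<alpha> < 1 \<and> 0 < \<sigma> \<longrightarrow>
     (\<exists>T0. \<forall>(N1::nat) (\<rho>::real) (x::real) (s::real).
        let h = \<sigma>^2 * \<alpha>^2; T = \<sigma> * \<alpha> * sqrt (real N1);
            a = 2 * \<alpha> * pi * (T + \<alpha> * ln x);
            u0 = complex_of_real ((T + \<alpha> * ln x)^2 - \<alpha>^2 * pi^2) - \<i> * complex_of_real a
        in (N1 \<ge> 1 \<and> T \<ge> T0 \<and> 0 < \<rho> \<and> \<rho> \<le> rho0A2 \<alpha> h N0 \<and> x \<in> UpsilonA2 \<alpha> \<sigma> T h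
            \<and> s \<in> {1, -1}) \<longrightarrow>
           norm (contour_integral (part_circlepath u0 \<rho> 0 (s * 2 * pi))
              (\<lambda>u. fA2 \<alpha> T u x * exp (- \<i> * complex_of_real (2 * real n * pi / h) * u)))
           \<le> C * exp ((\<rho> - a) * (2 * real n * pi / h)) * x powr \<alpha>)"
  \<comment> \<open>Since the bound holds for all \<open>N0\<close> and \<open>T\<close>, the value 2 serves for \<open>N0bar\<close>, \<open>C\<close> and \<open>T0\<close> alike.\<close>
  unfolding Let_def
  by (intro exI[of _ 2] conjI allI impI, simp)
    (elim conjE, rule norm_contour_integral_fA2_part_circlepath_le; assumption)

end
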